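(* Let $(p_{ij})_{i,j\in\{0,1\}}$ be a transition matrix with all $p_{ij}\in(0,1)$ and $p_{ij}\ne\tfrac12$ for some $(i,j)$; for $i\in\{0,1\}$ let $I_n^i\sim B(n,p_{i0})$. Let $(X_n^i,Z_n^i)_{n\in\mathbb N_0}$, $i\in\{0,1\}$, be random variables with finite second moments such that $X_n^i=Z_n^i=0$ for $n\le1$ and, for all $n\ge2$ and $i\in\{0,1\}$, $$\begin{pmatrix}X_n^i\\ Z_n^i\end{pmatrix}\stackrel{d}{=}\begin{pmatrix}X^0_{I_n^i}\\ Z^0_{I_n^i}\end{pmatrix}+\begin{pmatrix}X^1_{n-I_n^i}\\ Z^1_{n-I_n^i}\end{pmatrix}+\begin{pmatrix}\eta_n^{i,1}\\ \eta_n^{i,2}\end{pmatrix},$$ where on the right the families $(X^0_k,Z^0_k)_{k\le n}$, $(X^1_k,Z^1_k)_{k\le n}$ and $I_n^i$ are independent, and $$\eta_n^{i,1}=\frac1H\Big(n\log n-\mathbb E\big[I_n^i\log I_n^i+(n-I_n^i)\log(n-I_n^i)\big]\Big)+\pi_{1-i}\frac{H_{1-i}-H_i}{H}n+\frac{H_1-H_0}{(p_{01}+p_{10})H}p_{i0}p_{i1}^{n-1}n,\quad \eta_n^{i,2}=n-\eta_n^{i,1}$$ (for $n\ge2$; $\eta_n^{i,1}=\eta_n^{i,2}=0$ for $n\le1$). Then for all $n\in\mathbb N_0$, $$\mathbb E[X_n^0]=\frac1H n\log n+\frac{H_1-H_0}{(p_{01}+p_{10})H}n\mathbf 1_{\{n\ge2\}},\qquad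 \mathbb E[X_n^1]=\frac1H n\log n.$$
   Context: $0\log0:=0$. $\pi_0=p_{10}/(p_{01}+p_{10})$, $\pi_1=p_{01}/(p_{01}+p_{10})$, $H_i=-\sum_jp_{ij}\log p_{ij}$, $H=\pi_0H_0+\pi_1H_1$. *)

theory Defs
  imports "HOL-Probability.Probability"
begin

text \<open>Convention 0 log 0 = 0 (natural logarithm; the claimed identities are base independent).\<close>
definition xlogx :: "real \<Rightarrow> real" where
  "xlogx x = (if x = 0 then 0 else x * ln x)"

definition Hent :: "(nat \<Rightarrow> nat \<Rightarrow> real) \<Rightarrow> nat \<Rightarrow> real" where
  "Hent p i = - (\<Sum>j<2. xlogx (p i j))"

definition piv :: "(nat \<Rightarrow> nat \<Rightarrow> real) \<Rightarrow> nat \<Rightarrow> real" where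
  "piv p i = (if i = 0 then p 1 0 else p 0 1) / (p 0 1 + p 1 0)"

definition Htot :: "(nat \<Rightarrow> nat \<Rightarrow> real) \<Rightarrow> real" where
  "Htot p = piv p 0 * Hent p 0 + piv p 1 * Hent p 1"

definition eta1 :: "(nat \<Rightarrow> nat \<Rightarrow> real) \<Rightarrow> nat \<Rightarrow> nat \<Rightarrow> real" where
  "eta1 p i n = (if n \<le> 1 then 0 else
      (xlogx (real n) - measure_pmf.expectation (binomial_pmf n (p i 0))
          (\<lambda>k. xlogx (real k) + xlogx (real (n - k)))) / Htot p
      + piv p (1 - i) * (Hent p (1 - i) - Hent p i) / Htot p * real n
      + (Hent p 1 - Hent p 0) / ((p 0 1 + p 1 0) * Htot p) * p i 0 * p i 1 ^ (n - 1) * real n)"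

definition eta2 :: "(nat \<Rightarrow> nat \<Rightarrow> real) \<Rightarrow> nat \<Rightarrow> nat \<Rightarrow> real" where
  "eta2 p i n = (if n \<le> 1 then 0 else real n - eta1 p i n)"

definition law :: "'a measure \<Rightarrow> (nat \<Rightarrow> nat \<Rightarrow> 'a \<Rightarrow> real) \<Rightarrow> (nat \<Rightarrow> nat \<Rightarrow> 'a \<Rightarrow> real)
    \<Rightarrow> nat \<Rightarrow> nat \<Rightarrow> (real \<times> real) measure" where
  "law M X Z i n = distr M borel (\<lambda>\<omega>. (X i n \<omega>, Z i n \<omega>))"

text \<open>Law of the right-hand side of the distributional recursion:
  (X^0_{I}, Z^0_{I}) + (X^1_{n-I}, Z^1_{n-I}) + (eta1, eta2) with I ~ B(n, p i 0)
  and the two families and I independent.  Since I is independent of the families,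
  this law is the binomial mixture over k of the laws of independent sums.\<close>
definition rhs_law :: "(nat \<Rightarrow> nat \<Rightarrow> real) \<Rightarrow> (nat \<Rightarrow> nat \<Rightarrow> (real \<times> real) measure)
    \<Rightarrow> nat \<Rightarrow> nat \<Rightarrow> (real \<times> real) measure" where
  "rhs_law p L i n = measure_pmf (binomial_pmf n (p i 0)) \<bind>
     (\<lambda>k. distr (L 0 k \<Otimes>\<^sub>M L 1 (n - k)) borel
        (\<lambda>((x0, z0), (x1, z1)). (x0 + x1 + eta1 p i n, z0 + z1 + eta2 p i n)))"

end

theory Submission
  imports Defs
begin

text \<open>
  Taking expectations in the distributional recursion gives a linear recursion for the means
  \<open>e\<^sub>i(n) = E[e\<^sub>0(I) + e\<^sub>1(n - I)] + \<eta>\<^sub>n\<^sup>i\<^sup>,\<^sup>1\<close> with \<open>I \<sim> B(n, p\<^sub>i\<^sub>0)\<close>.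
  The claimed closed form satisfies it: the toll was designed to cancel the entropy term, and the
  linear drift balances because \<open>\<pi>\<^sub>1(H\<^sub>1 - H\<^sub>0)/H\<close> and \<open>\<pi>\<^sub>0(H\<^sub>0 - H\<^sub>1)/H\<close> are \<open>p\<^sub>0\<^sub>1\<close>
  and \<open>-p\<^sub>1\<^sub>0\<close> times the drift constant. Uniqueness: if the difference of two solutions vanishes
  below \<open>n\<close>, only the terms \<open>I = n\<close> and \<open>I = 0\<close> survive, which leaves a \<open>2 \<times> 2\<close> linear
  system with row sums \<open>p\<^sub>i\<^sub>0\<^sup>n + p\<^sub>i\<^sub>1\<^sup>n < 1\<close>; its only solution is zero.
\<close>

lemma integral_bind_measure_pmf_finite_nonneg:
  fixes g :: "'b \<Rightarrow> real"
  assumes B: "finite (set_pmf B)"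
    and K: "\<And>x. prob_space (K x)" "\<And>x. sets (K x) = sets N"
    and g: "\<And>x. integrable (K x) g" "\<And>y. 0 \<le> g y"
  shows "integrable (measure_pmf B \<bind> K) g
    \<and> integral\<^sup>L (measure_pmf B \<bind> K) g = (\<integral>x. integral\<^sup>L (K x) g \<partial>B)"
proof -
  have K_meas: "K \<in> measurable (measure_pmf B) (subprob_algebra N)"
    by (simp add: space_subprob_algebra K prob_space_imp_subprob_space)
  have "g \<in> borel_measurable N"
    using borel_measurable_integrable[OF g(1)] measurable_cong_sets[OF K(2) refl] by blast
  moreover have sets_bind: "sets (measure_pmf B \<bind> K) = sets N"
    by (rule sets_bind) (auto simp: K)
  ultimately have g_meas: "g \<in> borel_measurable (measure_pmf B \<bind> K)"
    using measurable_cong_sets[OF sets_bind refl] by blast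
  have mean_nonneg: "0 \<le> (\<integral>x. integral\<^sup>L (K x) g \<partial>B)"
    by (intro integral_nonneg_AE) (auto simp: g)
  have "(\<integral>\<^sup>+y. g y \<partial>(measure_pmf B \<bind> K)) = (\<integral>\<^sup>+x. \<integral>\<^sup>+y. g y \<partial>K x \<partial>B)"
    using \<open>g \<in> borel_measurable N\<close> by (intro nn_integral_bind[OF _ K_meas]) simp
  also have "\<dots> = (\<integral>\<^sup>+x. integral\<^sup>L (K x) g \<partial>B)"
    by (intro nn_integral_cong nn_integral_eq_integral) (auto simp: g)
  also have "\<dots> = (\<integral>x. integral\<^sup>L (K x) g \<partial>B)"
    by (intro nn_integral_eq_integral integrable_measure_pmf_finite B)
       (auto intro!: integral_nonneg_AE simp: g)
  finally have nn: "(\<integral>\<^sup>+y. g y \<partial>(measure_pmf B \<bind> K)) = (\<integral>x. integral\<^sup>L (K x) g \<partial>B)" .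
  show ?thesis
    using nn mean_nonneg g(2) integral_eq_nn_integral[OF g_meas]
    by (auto simp: integrable_iff_bounded g_meas)
qed

lemma integral_bind_measure_pmf_finite:
  fixes f :: "'b \<Rightarrow> real"
  assumes B: "finite (set_pmf B)"
    and K: "\<And>x. prob_space (K x)" "\<And>x. sets (K x) = sets N"
    and f: "\<And>x. integrable (K x) f"
  shows "integral\<^sup>L (measure_pmf B \<bind> K) f = (\<integral>x. integral\<^sup>L (K x) f \<partial>B)"
proof -
  define f_pos where "f_pos y = max (f y) 0" for y
  define f_neg where "f_neg y = max (- f y) 0" for y
  have f_decomp: "f = (\<lambda>y. f_pos y - f_neg y)"
    by (auto simp: f_pos_def f_neg_def)
  have int_parts: "integrable (K x) f_pos" "integrable (K x) f_neg" for x
    unfolding f_pos_def f_neg_def using f by auto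
  have nonneg: "0 \<le> f_pos y" "0 \<le> f_neg y" for y
    by (simp_all add: f_pos_def f_neg_def)
  note pos = integral_bind_measure_pmf_finite_nonneg[where K=K, OF B K int_parts(1) nonneg(1)]
  note neg = integral_bind_measure_pmf_finite_nonneg[where K=K, OF B K int_parts(2) nonneg(2)]
  have "integral\<^sup>L (measure_pmf B \<bind> K) f
      = integral\<^sup>L (measure_pmf B \<bind> K) f_pos - integral\<^sup>L (measure_pmf B \<bind> K) f_neg"
    using pos neg by (subst f_decomp) (simp add: Bochner_Integration.integral_diff)
  also have "\<dots> = (\<integral>x. integral\<^sup>L (K x) f_pos - integral\<^sup>L (K x) f_neg \<partial>B)"
    using pos neg B by (simp add: integrable_measure_pmf_finite)
  also have "\<dots> = (\<integral>x. integral\<^sup>L (K x) f \<partial>B)"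
    using int_parts by (simp add: f_decomp Bochner_Integration.integral_diff)
  finally show ?thesis .
qed

lemma (in prob_space) integrable_integral_comp_fst:
  fixes f :: "'b \<Rightarrow> real"
  assumes f: "integrable N f"
  shows "integrable (N \<Otimes>\<^sub>M M) (\<lambda>w. f (fst w))"
    and "integral\<^sup>L (N \<Otimes>\<^sub>M M) (\<lambda>w. f (fst w)) = integral\<^sup>L N f"
proof -
  have f_meas: "f \<in> borel_measurable N"
    using f by blast
  show "integrable (N \<Otimes>\<^sub>M M) (\<lambda>w. f (fst w))"
    using integrable_distr_eq[OF measurable_fst[of N M] f_meas] f by (simp add: distr_pair_fst)
  show "integral\<^sup>L (N \<Otimes>\<^sub>M M) (\<lambda>w. f (fst w)) = integral\<^sup>L N f"
    using integral_distr[OF measurable_fst[of N M] f_meas] by (simp add: distr_pair_fst)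
qed

lemma (in pair_prob_space) integral_add_fst_snd:
  fixes f g :: "_ \<Rightarrow> real"
  assumes f: "integrable M1 f" and g: "integrable M2 g"
  shows "integrable (M1 \<Otimes>\<^sub>M M2) (\<lambda>w. f (fst w) + g (snd w))"
    and "integral\<^sup>L (M1 \<Otimes>\<^sub>M M2) (\<lambda>w. f (fst w) + g (snd w)) = integral\<^sup>L M1 f + integral\<^sup>L M2 g"
proof -
  interpret swapped: pair_prob_space M2 M1 ..
  have f_fst: "integrable (M1 \<Otimes>\<^sub>M M2) (\<lambda>w. f (fst w))"
    "integral\<^sup>L (M1 \<Otimes>\<^sub>M M2) (\<lambda>w. f (fst w)) = integral\<^sup>L M1 f"
    using M2.integrable_integral_comp_fst[OF f] by simp_all
  have "integrable (M2 \<Otimes>\<^sub>M M1) (\<lambda>w. g (fst w))"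
    "integral\<^sup>L (M2 \<Otimes>\<^sub>M M1) (\<lambda>w. g (fst w)) = integral\<^sup>L M2 g"
    using M1.integrable_integral_comp_fst[OF g] by simp_all
  then have g_snd: "integrable (M1 \<Otimes>\<^sub>M M2) (\<lambda>w. g (snd w))"
    "integral\<^sup>L (M1 \<Otimes>\<^sub>M M2) (\<lambda>w. g (snd w)) = integral\<^sup>L M2 g"
    using swapped.integrable_product_swap[of "\<lambda>w. g (fst w)"]
      swapped.integral_product_swap[of "\<lambda>w. g (fst w)"] g
    by (simp_all add: case_prod_beta')
  show "integrable (M1 \<Otimes>\<^sub>M M2) (\<lambda>w. f (fst w) + g (snd w))"
    using f_fst g_snd by simp
  show "integral\<^sup>L (M1 \<Otimes>\<^sub>M M2) (\<lambda>w. f (fst w) + g (snd w)) = integral\<^sup>L M1 f + integral\<^sup>L M2 g"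
    using f_fst g_snd by simp
qed

lemma integral_fst_distr_shifted_sum:
  fixes P Q :: "(real \<times> real) measure" and e1 e2 :: real
  assumes P: "prob_space P" "sets P = sets borel" "integrable P fst"
    and Q: "prob_space Q" "sets Q = sets borel" "integrable Q fst"
  defines "D \<equiv> distr (P \<Otimes>\<^sub>M Q) borel (\<lambda>((x0, z0), (x1, z1)). (x0 + x1 + e1, z0 + z1 + e2))"
  shows "prob_space D" "integrable D fst"
    and "integral\<^sup>L D fst = integral\<^sup>L P fst + integral\<^sup>L Q fst + e1"
proof -
  interpret pair_prob_space P Q
    using P Q by (simp add: pair_prob_space_def pair_sigma_finite_def prob_space_imp_sigma_finite)
  have sets_PQ: "sets (P \<Otimes>\<^sub>M Q) = sets (borel :: ((real \<times> real) \<times> (real \<times> real)) measure)"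
    using sets_pair_measure_cong[OF P(2) Q(2)] by (simp only: borel_prod)
  define shift where "shift w = (fst (fst w) + fst (snd w) + e1, snd (fst w) + snd (snd w) + e2)"
    for w :: "(real \<times> real) \<times> (real \<times> real)"
  have D_eq: "D = distr (P \<Otimes>\<^sub>M Q) borel shift"
    unfolding D_def shift_def by (simp add: case_prod_beta')
  have shift_meas: "shift \<in> measurable (P \<Otimes>\<^sub>M Q) borel"
    unfolding measurable_cong_sets[OF sets_PQ refl] shift_def
    by (intro borel_measurable_continuous_onI continuous_intros)
  have fst_meas: "(fst :: real \<times> real \<Rightarrow> real) \<in> borel_measurable borel"
    by (intro borel_measurable_continuous_onI continuous_intros)
  have Q_shift: "integrable Q (\<lambda>v. fst v + e1)"
    using Q by simp
  show "prob_space D"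
    unfolding D_eq by (rule prob_space_distr[OF shift_meas])
  show "integrable D fst"
    using integral_add_fst_snd(1)[OF P(3) Q_shift]
    unfolding D_eq integrable_distr_eq[OF shift_meas fst_meas] by (simp add: shift_def add.assoc M2.prob_space)
  show "integral\<^sup>L D fst = integral\<^sup>L P fst + integral\<^sup>L Q fst + e1"
    using integral_add_fst_snd(2)[OF P(3) Q_shift] Q
    unfolding D_eq integral_distr[OF shift_meas fst_meas] by (simp add: shift_def add.assoc M2.prob_space)
qed

lemma integral_fst_rhs_law:
  assumes q: "p i 0 \<in> {0..1}"
    and L: "\<And>j m. j \<le> 1 \<Longrightarrow> prob_space (L j m) \<and> sets (L j m) = sets borel \<and> integrable (L j m) fst"
  shows "integral\<^sup>L (rhs_law p L i n) fst = measure_pmf.expectation (binomial_pmf n (p i 0))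
           (\<lambda>k. integral\<^sup>L (L 0 k) fst + integral\<^sup>L (L 1 (n - k)) fst + eta1 p i n)"
proof -
  define K where "K k = distr (L 0 k \<Otimes>\<^sub>M L 1 (n - k)) borel
      (\<lambda>((x0, z0), (x1, z1)). (x0 + x1 + eta1 p i n, z0 + z1 + eta2 p i n))" for k
  have L0: "prob_space (L 0 k)" "sets (L 0 k) = sets borel" "integrable (L 0 k) fst" for k
    using L[of 0 k] by simp_all
  have L1: "prob_space (L 1 k)" "sets (L 1 k) = sets borel" "integrable (L 1 k) fst" for k
    using L[of 1 k] by simp_all
  have K_props: "prob_space (K k)" "sets (K k) = sets borel" "integrable (K k) fst"
    "integral\<^sup>L (K k) fst = integral\<^sup>L (L 0 k) fst + integral\<^sup>L (L 1 (n - k)) fst + eta1 p i n" for k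
    unfolding K_def using integral_fst_distr_shifted_sum[OF L0 L1] by simp_all
  have "integral\<^sup>L (rhs_law p L i n) fst = (\<integral>k. integral\<^sup>L (K k) fst \<partial>binomial_pmf n (p i 0))"
    unfolding rhs_law_def K_def[symmetric]
    by (rule integral_bind_measure_pmf_finite[where N = borel]) (use K_props q in auto)
  then show ?thesis
    by (simp add: K_props)
qed

lemma expectation_binomial_pmf_real:
  assumes q: "q \<in> {0..1}"
  shows "measure_pmf.expectation (binomial_pmf n q) real = real n * q"
proof (cases n)
  case (Suc m)
  have "measure_pmf.expectation (binomial_pmf n q) real
      = (\<Sum>k\<le>Suc m. real (Suc m choose k) * q ^ k * (1 - q) ^ (Suc m - k) * real k)"
    using q Suc by (simp add: expectation_binomial_pmf' mult.commute)
  also have "\<dots> = (\<Sum>j\<le>m. real (Suc m choose Suc j) * real (Suc j) * q ^ Suc j * (1 - q) ^ (m - j))"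
    by (subst sum.atMost_Suc_shift) (simp add: mult_ac)
  also have "\<dots> = real (Suc m) * q * (\<Sum>j\<le>m. real (m choose j) * q ^ j * (1 - q) ^ (m - j))"
  proof -
    have "real (Suc m choose Suc j) * real (Suc j) = real (Suc m) * real (m choose j)" for j
      by (metis Suc_times_binomial_eq of_nat_mult)
    then show ?thesis
      unfolding sum_distrib_left by (intro sum.cong refl) (simp only: power_Suc mult_ac)
  qed
  also have "\<dots> = real n * q"
    using binomial_ring[of q "1 - q" m] Suc by simp
  finally show ?thesis .
qed (use q in \<open>simp add: binomial_pmf_0\<close>)

lemma expectation_binomial_pmf_real_ge_2:
  assumes q: "q \<in> {0..1}"
  shows "measure_pmf.expectation (binomial_pmf n q) (\<lambda>k. real k * (if 2 \<le> k then 1 else 0))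
    = real n * q - real n * q * (1 - q) ^ (n - 1)"
proof -
  have "(\<lambda>k. real k * (if 2 \<le> k then 1 else 0)) = (\<lambda>k. real k - (if k = 1 then 1 else 0))"
    by (auto simp: fun_eq_iff)
  moreover have "measure_pmf.expectation (binomial_pmf n q) (\<lambda>k. if k = 1 then 1 else 0 :: real)
      = real n * q * (1 - q) ^ (n - 1)"
    using q by (subst integral_measure_pmf_real[where A = "{1}"]) (auto split: if_splits)
  ultimately show ?thesis
    using q by (simp add: Bochner_Integration.integral_diff expectation_binomial_pmf_real)
qed

definition mean_shift :: "(nat \<Rightarrow> nat \<Rightarrow> real) \<Rightarrow> real" where
  "mean_shift p = (Hent p 1 - Hent p 0) / ((p 0 1 + p 1 0) * Htot p)"

definition mean_X :: "(nat \<Rightarrow> nat \<Rightarrow> real) \<Rightarrow> nat \<Rightarrow> nat \<Rightarrow> real" where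
  "mean_X p i n = xlogx (real n) / Htot p
     + (if i = 0 then mean_shift p * real n * (if 2 \<le> n then 1 else 0) else 0)"

lemma piv_entropy_gap:
  assumes "i \<le> 1" and "p i 0 + p i 1 = 1"
  shows "piv p (1 - i) * (Hent p (1 - i) - Hent p i) / Htot p
    = ((if i = 0 then 1 else 0) - p i 0) * mean_shift p"
proof (cases "i = 0")
  case True
  with assms show ?thesis
    by (simp add: piv_def mean_shift_def)
next
  case False
  with assms have "i = 1" by simp
  then show ?thesis
    by (simp add: piv_def mean_shift_def field_simps)
qed

text \<open>The correction term \<open>p\<^sub>i\<^sub>0 p\<^sub>i\<^sub>1\<^sup>n\<^sup>-\<^sup>1 n\<close> of the toll compensates for the drift of
  \<open>mean_X p 0 k\<close> being switched off at \<open>k = 1\<close>.\<close>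

lemma mean_X_recursion:
  assumes i: "i \<le> 1" and n: "2 \<le> n" and q: "p i 0 \<in> {0..1}" and stoch: "p i 0 + p i 1 = 1"
  shows "measure_pmf.expectation (binomial_pmf n (p i 0))
           (\<lambda>k. mean_X p 0 k + mean_X p 1 (n - k) + eta1 p i n) = mean_X p i n"
proof -
  define E where "E = measure_pmf.expectation (binomial_pmf n (p i 0))
                        (\<lambda>k. xlogx (real k) + xlogx (real (n - k)))"
  have eta: "eta1 p i n = (xlogx (real n) - E) / Htot p + ((if i = 0 then 1 else 0) - p i 0) * mean_shift p * real n
      + mean_shift p * p i 0 * (1 - p i 0) ^ (n - 1) * real n"
  proof -
    have "p i 1 = 1 - p i 0"
      using stoch by simp
    then show ?thesis
      using n piv_entropy_gap[where p = p, OF i stoch]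
      by (simp add: eta1_def E_def mean_shift_def)
  qed
  have "(\<lambda>k. mean_X p 0 k + mean_X p 1 (n - k) + eta1 p i n)
      = (\<lambda>k. (xlogx (real k) + xlogx (real (n - k))) / Htot p
             + mean_shift p * (real k * (if 2 \<le> k then 1 else 0)) + eta1 p i n)"
    by (auto simp: fun_eq_iff mean_X_def add_divide_distrib)
  then have "measure_pmf.expectation (binomial_pmf n (p i 0))
           (\<lambda>k. mean_X p 0 k + mean_X p 1 (n - k) + eta1 p i n)
      = E / Htot p + mean_shift p * (real n * p i 0 - real n * p i 0 * (1 - p i 0) ^ (n - 1)) + eta1 p i n"
    using q by (simp add: E_def expectation_binomial_pmf_real_ge_2)
  also have "\<dots> = mean_X p i n"
    using n i by (simp add: eta mean_X_def diff_divide_distrib algebra_simps)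
  finally show ?thesis .
qed

lemma substochastic_fixed_point_eq_0:
  fixes a b c d x y :: real
  assumes nonneg: "0 \<le> a" "0 \<le> b" "0 \<le> c" "0 \<le> d" and rows: "a + b < 1" "c + d < 1"
    and eqs: "x = a * x + b * y" "y = c * x + d * y"
  shows "x = 0 \<and> y = 0"
proof -
  define m where "m = max \<bar>x\<bar> \<bar>y\<bar>"
  have "\<bar>x\<bar> \<le> (a + b) * m"
  proof -
    have "\<bar>x\<bar> \<le> a * \<bar>x\<bar> + b * \<bar>y\<bar>"
      using eqs(1) abs_triangle_ineq[of "a * x" "b * y"] nonneg by (simp add: abs_mult)
    also have "\<dots> \<le> (a + b) * m"
      using nonneg by (simp add: m_def distrib_right add_mono mult_left_mono)
    finally show ?thesis .
  qed
  moreover have "\<bar>y\<bar> \<le> (c + d) * m"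
  proof -
    have "\<bar>y\<bar> \<le> c * \<bar>x\<bar> + d * \<bar>y\<bar>"
      using eqs(2) abs_triangle_ineq[of "c * x" "d * y"] nonneg by (simp add: abs_mult)
    also have "\<dots> \<le> (c + d) * m"
      using nonneg by (simp add: m_def distrib_right add_mono mult_left_mono)
    finally show ?thesis .
  qed
  ultimately have "m \<le> max (a + b) (c + d) * m"
    unfolding m_def by (smt (verit) mult_right_mono abs_ge_zero)
  then have "m \<le> 0"
    using rows by (smt (verit) m_def abs_ge_zero mult_less_cancel_right2)
  then show ?thesis
    by (simp add: m_def)
qed

lemma power_add_power_one_minus_less_1:
  fixes q :: real
  assumes "0 < q" "q < 1" "2 \<le> n"
  shows "q ^ n + (1 - q) ^ n < 1"
  using power_strict_decreasing[of 1 n q] power_strict_decreasing[of 1 n "1 - q"] assms by simp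

lemma binomial_split_recursion_eq_0:
  fixes d :: "nat \<Rightarrow> nat \<Rightarrow> real" and q :: "nat \<Rightarrow> real"
  assumes q: "\<And>i. i \<le> 1 \<Longrightarrow> 0 < q i \<and> q i < 1"
    and init: "\<And>i n. i \<le> 1 \<Longrightarrow> n \<le> 1 \<Longrightarrow> d i n = 0"
    and rec: "\<And>i n. i \<le> 1 \<Longrightarrow> 2 \<le> n \<Longrightarrow>
        d i n = measure_pmf.expectation (binomial_pmf n (q i)) (\<lambda>k. d 0 k + d 1 (n - k))"
  shows "d 0 n = 0 \<and> d 1 n = 0"
proof (induction n rule: less_induct)
  case (less n)
  show ?case
  proof (cases "2 \<le> n")
    case False
    then show ?thesis using init by simp
  next
    case n: True
    have extremes: "d i n = q i ^ n * d 0 n + (1 - q i) ^ n * d 1 n" if i: "i \<le> 1" for i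
    proof -
      have only_extremes: "d 0 k + d 1 (n - k) = (if k = n then d 0 n else 0) + (if k = 0 then d 1 n else 0)"
        if "k \<le> n" for k
        using less.IH[of k] less.IH[of "n - k"] that n by (cases "k = 0"; cases "k = n") auto
      have "d i n = (\<Sum>k\<le>n. real (n choose k) * q i ^ k * (1 - q i) ^ (n - k) * (d 0 k + d 1 (n - k)))"
        using rec[OF i n] q[OF i] by (simp add: expectation_binomial_pmf' distrib_left sum.distrib)
      also have "\<dots> = (\<Sum>k\<le>n. real (n choose k) * q i ^ k * (1 - q i) ^ (n - k)
                             * ((if k = n then d 0 n else 0) + (if k = 0 then d 1 n else 0)))"
        by (intro sum.cong refl) (metis atMost_iff only_extremes)
      finally show ?thesis
        by (simp add: distrib_left sum.distrib if_distrib[of "\<lambda>x. _ * x"] sum.delta cong: if_cong)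
    qed
    have "q i ^ n + (1 - q i) ^ n < 1" if "i \<le> 1" for i
      using power_add_power_one_minus_less_1[of "q i" n] q[OF that] n by simp
    then show ?thesis
      using substochastic_fixed_point_eq_0[OF _ _ _ _ _ _ extremes[of 0] extremes[of 1]] q[of 0] q[of 1]
      by simp
  qed
qed

lemma (in prob_space) law_fst:
  assumes X: "X i n \<in> borel_measurable M" "integrable M (X i n)" and Z: "Z i n \<in> borel_measurable M"
  shows "prob_space (law M X Z i n) \<and> sets (law M X Z i n) = sets borel \<and> integrable (law M X Z i n) fst"
    and "integral\<^sup>L (law M X Z i n) fst = expectation (X i n)"
proof -
  have pair_meas: "(\<lambda>\<omega>. (X i n \<omega>, Z i n \<omega>)) \<in> borel_measurable M"
    using X Z by (intro borel_measurable_Pair)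
  have fst_meas: "(fst :: real \<times> real \<Rightarrow> real) \<in> borel_measurable borel"
    by (intro borel_measurable_continuous_onI continuous_intros)
  show "prob_space (law M X Z i n) \<and> sets (law M X Z i n) = sets borel \<and> integrable (law M X Z i n) fst"
    unfolding law_def integrable_distr_eq[OF pair_meas fst_meas]
    using prob_space_distr[OF pair_meas] X by simp
  show "integral\<^sup>L (law M X Z i n) fst = expectation (X i n)"
    unfolding law_def integral_distr[OF pair_meas fst_meas] by simp
qed

theorem lemma6p3:
  fixes p :: "nat \<Rightarrow> nat \<Rightarrow> real"
    and M :: "'a measure"
    and X Z :: "nat \<Rightarrow> nat \<Rightarrow> 'a \<Rightarrow> real"
  assumes "prob_space M"
    and p_range: "\<And>i j. i \<le> 1 \<Longrightarrow> j \<le> 1 \<Longrightarrow> 0 < p i j \<and> p i j < 1"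
    and p_stoch: "\<And>i. i \<le> 1 \<Longrightarrow> p i 0 + p i 1 = 1"
    and p_nonhalf: "\<exists>i\<le>1. \<exists>j\<le>1. p i j \<noteq> 1/2"
    and meas: "\<And>i n. i \<le> 1 \<Longrightarrow> X i n \<in> borel_measurable M \<and> Z i n \<in> borel_measurable M"
    and sq_int: "\<And>i n. i \<le> 1 \<Longrightarrow>
          integrable M (\<lambda>\<omega>. (X i n \<omega>)\<^sup>2) \<and> integrable M (\<lambda>\<omega>. (Z i n \<omega>)\<^sup>2)"
    and init: "\<And>i n. i \<le> 1 \<Longrightarrow> n \<le> 1 \<Longrightarrow>
          (AE \<omega> in M. X i n \<omega> = 0) \<and> (AE \<omega> in M. Z i n \<omega> = 0)"
    and rec: "\<And>i n. i \<le> 1 \<Longrightarrow> 2 \<le> n \<Longrightarrow>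
          law M X Z i n = rhs_law p (law M X Z) i n"
  shows "\<forall>n. prob_space.expectation M (X 0 n)
              = xlogx (real n) / Htot p
                + (Hent p 1 - Hent p 0) / ((p 0 1 + p 1 0) * Htot p) * real n
                  * (if n \<ge> 2 then 1 else 0)
          \<and> prob_space.expectation M (X 1 n) = xlogx (real n) / Htot p"
proof -
  interpret prob_space M by fact
  have q: "0 < p i 0 \<and> p i 0 < 1" if "i \<le> 1" for i
    using p_range[OF that] by simp
  have X_int: "integrable M (X i n)" if "i \<le> 1" for i n
    using square_integrable_imp_integrable meas[OF that] sq_int[OF that] by blast
  have law: "prob_space (law M X Z i n) \<and> sets (law M X Z i n) = sets borel \<and> integrable (law M X Z i n) fst"
    "integral\<^sup>L (law M X Z i n) fst = expectation (X i n)" if "i \<le> 1" for i n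
    using law_fst[of X i n Z] meas[OF that] X_int[OF that] by auto
  define d where "d i n = expectation (X i n) - mean_X p i n" for i n
  have "d 0 n = 0 \<and> d 1 n = 0" for n
  proof (rule binomial_split_recursion_eq_0[OF q])
    show "d i n = 0" if "i \<le> 1" "n \<le> 1" for i n
    proof -
      have "expectation (X i n) = expectation (\<lambda>_. 0)"
        using init[OF that] meas[OF that(1)] by (intro integral_cong_AE) auto
      then show ?thesis
        using that by (auto simp: d_def mean_X_def xlogx_def le_Suc_eq)
    qed
    show "d i n = measure_pmf.expectation (binomial_pmf n (p i 0)) (\<lambda>k. d 0 k + d 1 (n - k))"
      if i: "i \<le> 1" and n: "2 \<le> n" for i n
    proof -
      have "expectation (X i n) = measure_pmf.expectation (binomial_pmf n (p i 0))
              (\<lambda>k. expectation (X 0 k) + expectation (X 1 (n - k)) + eta1 p i n)"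
        using integral_fst_rhs_law[of p i "law M X Z" n] law q[OF i] law(2)[OF i, symmetric]
        by (simp add: rec[OF i n])
      then show ?thesis
        using mean_X_recursion[where p = p, OF i n _ p_stoch[OF i]] q[OF i]
        by (simp add: d_def Bochner_Integration.integral_diff[symmetric] algebra_simps)
    qed
  qed
  then show ?thesis
    by (simp add: d_def mean_X_def mean_shift_def)
qed

end
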